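(* Let $n\in\mathbb{Z}$, $y_0>0$, and define for $x\in\mathbb{R}$, $y>0$ \[ G(x,y)=\frac{1}{2\pi}\log\frac{x^2+(y+y_0)^2}{x^2+(y-y_0)^2},\qquad p_n(x,y)=\frac{1}{\pi}\,\frac{y}{(x-2\pi n)^2+y^2}. \] Then for all $x\in\mathbb{R}$ and $y>0$, \[ \lim_{y_0\to\infty}\frac{G(x,y)}{p_n(0,y_0)}=2y, \] and if $y_0\ge 2\pi|n|$, then \[ \frac{G(x,y)}{p_n(0,y_0)}\le y\,g(y/y_0),\qquad\text{where } g(t)=t^{-1}\log\bigl(1+4t(t-1)^{-2}\bigr). \]
   Context: $G$ is the Green function of the upper half-plane (for $-\tfrac12\Delta$) with pole at $(0,y_0)$; $p_n$ is the Poisson kernel of the upper half-plane with pole at $2\pi n$. *)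

theory Defs
  imports Complex_Main
begin

definition greenG :: "real \<Rightarrow> real \<Rightarrow> real \<Rightarrow> real" where
  "greenG y0 x y = (1 / (2 * pi)) * ln ((x^2 + (y + y0)^2) / (x^2 + (y - y0)^2))"

definition poissonP :: "int \<Rightarrow> real \<Rightarrow> real \<Rightarrow> real" where
  "poissonP n x y = (1 / pi) * (y / ((x - 2 * pi * of_int n)^2 + y^2))"

definition gfun :: "real \<Rightarrow> real" where
  "gfun t = (1 / t) * ln (1 + 4 * t / (t - 1)^2)"

end

theory Submission
  imports Defs "HOL-Real_Asymp.Real_Asymp"
begin

text \<open>Since \<open>G/p\<^sub>n(0,y\<^sub>0) = \<pi>((2\<pi>n)\<^sup>2 + y\<^sub>0\<^sup>2)/y\<^sub>0 \<cdot> G\<close>, the limit is a plain asymptotic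
  expansion: \<open>G \<sim> 2y/(\<pi>y\<^sub>0)\<close>. For the bound, the quotient
  \<open>(x\<^sup>2 + (y+y\<^sub>0)\<^sup>2)/(x\<^sup>2 + (y-y\<^sub>0)\<^sup>2)\<close> decreases in \<open>x\<^sup>2\<close>, so \<open>G\<close> is largest on the axis
  \<open>x = 0\<close>, while \<open>y\<^sub>0 \<ge> 2\<pi>|n|\<close> gives \<open>1/p\<^sub>n(0,y\<^sub>0) \<le> 2\<pi>y\<^sub>0\<close>; and
  \<open>2\<pi>y\<^sub>0 G(0,y) = y\<^sub>0 log((y+y\<^sub>0)\<^sup>2/(y-y\<^sub>0)\<^sup>2) = y g(y/y\<^sub>0)\<close>.\<close>

lemma add_divide_add_le_divide:
  fixes a u v :: real
  assumes "0 \<le> a" "0 < v" "v \<le> u"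
  shows "(a + u) / (a + v) \<le> u / v"
proof -
  have "(a + u) * v \<le> u * (a + v)"
    using assms by (simp add: algebra_simps mult_left_mono)
  with assms show ?thesis
    by (simp add: divide_simps)
qed

lemma greenG_nonneg:
  assumes "0 < y" "0 < y0"
  shows "0 \<le> greenG y0 x y"
proof (cases "x\<^sup>2 + (y - y0)\<^sup>2 = 0")
  case False
  then have "0 < x\<^sup>2 + (y - y0)\<^sup>2"
    by (simp add: order_less_le)
  moreover have "x\<^sup>2 + (y - y0)\<^sup>2 \<le> x\<^sup>2 + (y + y0)\<^sup>2"
    using assms by (simp add: power2_eq_square algebra_simps)
  ultimately have "1 \<le> (x\<^sup>2 + (y + y0)\<^sup>2) / (x\<^sup>2 + (y - y0)\<^sup>2)"
    by simp
  then show ?thesis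
    unfolding greenG_def by simp
qed (simp add: greenG_def)

lemma greenG_le_greenG_axis:
  assumes "0 < y" "0 < y0" "y \<noteq> y0"
  shows "greenG y0 x y \<le> greenG y0 0 y"
proof -
  have pos: "0 < (y - y0)\<^sup>2"
    using assms by simp
  have "(y - y0)\<^sup>2 \<le> (y + y0)\<^sup>2"
    using assms by (simp add: power2_eq_square algebra_simps)
  then have "(x\<^sup>2 + (y + y0)\<^sup>2) / (x\<^sup>2 + (y - y0)\<^sup>2) \<le> (y + y0)\<^sup>2 / (y - y0)\<^sup>2"
    using pos by (intro add_divide_add_le_divide) auto
  moreover have "0 < (x\<^sup>2 + (y + y0)\<^sup>2) / (x\<^sup>2 + (y - y0)\<^sup>2)"
    using assms pos by (intro divide_pos_pos add_nonneg_pos) auto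
  ultimately show ?thesis
    unfolding greenG_def by (intro mult_left_mono ln_mono) auto
qed

lemma poissonP_pos:
  assumes "0 < y"
  shows "0 < poissonP n x y"
  using assms unfolding poissonP_def by (simp add: add_nonneg_pos)

lemma inverse_poissonP_origin_le:
  assumes "0 < y0" "2 * pi * \<bar>of_int n\<bar> \<le> y0"
  shows "1 / poissonP n 0 y0 \<le> 2 * pi * y0"
proof -
  have "\<bar>2 * pi * of_int n\<bar>\<^sup>2 \<le> y0\<^sup>2"
    using assms by (intro power_mono) (auto simp: abs_mult)
  then have "(2 * pi * of_int n)\<^sup>2 \<le> y0\<^sup>2"
    by simp
  then have "pi * ((2 * pi * of_int n)\<^sup>2 + y0\<^sup>2) / y0 \<le> pi * (2 * y0\<^sup>2) / y0"
    using assms by (intro divide_right_mono mult_left_mono) auto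
  also have "\<dots> = 2 * pi * y0"
    using assms by (simp add: power2_eq_square)
  finally show ?thesis
    unfolding poissonP_def by simp
qed

lemma greenG_axis_eq_gfun:
  assumes "0 < y" "0 < y0" "y \<noteq> y0"
  shows "2 * pi * y0 * greenG y0 0 y = y * gfun (y / y0)"
proof -
  have "(y - y0)\<^sup>2 \<noteq> 0"
    using assms by simp
  then have "(y + y0)\<^sup>2 / (y - y0)\<^sup>2 = 1 + 4 * y * y0 / (y - y0)\<^sup>2"
    by (simp add: field_simps power2_eq_square)
  also have "\<dots> = 1 + 4 * (y / y0) / (y / y0 - 1)\<^sup>2"
    using assms by (simp add: field_simps power2_eq_square)
  finally have "(y + y0)\<^sup>2 / (y - y0)\<^sup>2 = 1 + 4 * (y / y0) / (y / y0 - 1)\<^sup>2" .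
  then show ?thesis
    using assms unfolding greenG_def gfun_def by simp
qed

theorem lemma3p3:
  fixes n :: int and x y :: real
  assumes "y > 0"
  shows "((\<lambda>y0. greenG y0 x y / poissonP n 0 y0) \<longlongrightarrow> 2 * y) at_top \<and>
         (\<forall>y0. y0 > 0 \<longrightarrow> y0 \<ge> 2 * pi * \<bar>of_int n\<bar> \<longrightarrow> y \<noteq> y0 \<longrightarrow>
           greenG y0 x y / poissonP n 0 y0 \<le> y * gfun (y / y0))"
proof (intro conjI allI impI)
  show "((\<lambda>y0. greenG y0 x y / poissonP n 0 y0) \<longlongrightarrow> 2 * y) at_top"
    using assms unfolding greenG_def poissonP_def by real_asymp
next
  fix y0 :: real
  assume y0: "y0 > 0" "y0 \<ge> 2 * pi * \<bar>of_int n\<bar>" "y \<noteq> y0"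
  have "greenG y0 x y / poissonP n 0 y0 = greenG y0 x y * (1 / poissonP n 0 y0)"
    by simp
  also have "\<dots> \<le> greenG y0 0 y * (2 * pi * y0)"
    using assms y0 poissonP_pos[of y0 n 0]
    by (intro mult_mono greenG_le_greenG_axis inverse_poissonP_origin_le greenG_nonneg) auto
  also have "\<dots> = y * gfun (y / y0)"
    using greenG_axis_eq_gfun[OF assms y0(1,3)] by (simp add: mult_ac)
  finally show "greenG y0 x y / poissonP n 0 y0 \<le> y * gfun (y / y0)" .
qed

end
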